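(* Let $(V,w,\mu)$ be a simple weighted graph with minimal Markov chain $(X_t)_{t\ge0}$. Let $\mathcal U$ be a bounded real function on $V$, and let $\varphi$ be a bounded nonnegative function on $V$ with \[(\Delta+\mathcal U)\varphi\ge0\quad\text{on }V.\] Then $\tilde P^{\mathcal U}_t\varphi\le\varphi$ for all $t\ge0$.
   Context: A simple weighted graph $(V,w,\mu)$ consists of a countably infinite set $V$, a symmetric function $w:V\times V\to[0,\infty)$ and a function $\mu:V\to(0,\infty)$. The graph with edges $\{x\sim y:w(x,y)>0\}$ is assumed to be locally finite, connected, and without loops or multiple edges. The minimal Markov chain has $Q$-matrix $q_{xy}=w(x,y)/\mu(x)$ for $x\neq y$ and $q_{xx}=-\frac1{\mu(x)}\sum_y w(x,y)$. It has lifetime $\zeta$, cemetery $\infty$, and laws $\mathbb P_x$; functions are extended by $f(\infty)=0$. The formal Laplacian is $\Delta u(x)=\frac1{\mu(x)}\sum_y w(x,y)(u(x)-u(y))$. For bounded $\mathcal U$ and bounded nonnegative $f$, \[\tilde P^{\mathcal U}_t f(x)=\mathbb E_x\Big[f(X_t)\exp\Big(-\int_0^t\mathcal U(X_s)\,ds\Big)\Big].\] *)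

theory Defs
  imports "HOL-Probability.Probability" "HOL-Library.Countable"
begin

definition simple_weighted_graph :: "('v::countable \<Rightarrow> 'v \<Rightarrow> real) \<Rightarrow> ('v \<Rightarrow> real) \<Rightarrow> bool" where
  "simple_weighted_graph w \<mu> \<longleftrightarrow>
     infinite (UNIV :: 'v set) \<and>
     (\<forall>x y. w x y = w y x) \<and> (\<forall>x y. 0 \<le> w x y) \<and> (\<forall>x. w x x = 0) \<and>
     (\<forall>x. 0 < \<mu> x) \<and> (\<forall>x. finite {y. 0 < w x y}) \<and>
     (\<forall>x y. (\<lambda>a b. 0 < w a b)\<^sup>*\<^sup>* x y)"

definition nbrs :: "('v \<Rightarrow> 'v \<Rightarrow> real) \<Rightarrow> 'v \<Rightarrow> 'v set" where
  "nbrs w x = {y. 0 < w x y}"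

definition wdeg :: "('v \<Rightarrow> 'v \<Rightarrow> real) \<Rightarrow> 'v \<Rightarrow> real" where
  "wdeg w x = (\<Sum>y\<in>nbrs w x. w x y)"

text \<open>Formal Laplacian (the sum over all y reduces to the finite neighbour set).\<close>
definition graph_laplacian :: "('v \<Rightarrow> 'v \<Rightarrow> real) \<Rightarrow> ('v \<Rightarrow> real) \<Rightarrow> ('v \<Rightarrow> real) \<Rightarrow> 'v \<Rightarrow> real" where
  "graph_laplacian w \<mu> u x = (1 / \<mu> x) * (\<Sum>y\<in>nbrs w x. w x y * (u x - u y))"

text \<open>Jump chain step: from x, using a uniform variable u in [0,1], choose neighbour y
  with probability w(x,y)/deg(x) (inverse-CDF along the enumeration to_nat).\<close>
definition cum_prob :: "('v::countable \<Rightarrow> 'v \<Rightarrow> real) \<Rightarrow> 'v \<Rightarrow> 'v \<Rightarrow> real" where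
  "cum_prob w x y = (\<Sum>z\<in>{z\<in>nbrs w x. to_nat z \<le> to_nat y}. w x z) / wdeg w x"

definition jump_next :: "('v::countable \<Rightarrow> 'v \<Rightarrow> real) \<Rightarrow> 'v \<Rightarrow> real \<Rightarrow> 'v" where
  "jump_next w x u =
     (if \<exists>y\<in>nbrs w x. u < cum_prob w x y
      then from_nat (LEAST k. \<exists>y\<in>nbrs w x. to_nat y = k \<and> u < cum_prob w x y)
      else x)"

text \<open>Sample points: omega n = (U_n, E_n), U_n uniform on [0,1], E_n standard exponential,
  all independent.\<close>
definition chain_space :: "(nat \<Rightarrow> real \<times> real) measure" where
  "chain_space = PiM UNIV (\<lambda>_. pair_measure (uniform_measure lborel {0..1::real})
                                           (density lborel (exponential_density 1)))"

fun jump_chain :: "('v::countable \<Rightarrow> 'v \<Rightarrow> real) \<Rightarrow> 'v \<Rightarrow> (nat \<Rightarrow> real \<times> real) \<Rightarrow> nat \<Rightarrow> 'v" where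
  "jump_chain w x \<omega> 0 = x"
| "jump_chain w x \<omega> (Suc n) = jump_next w (jump_chain w x \<omega> n) (fst (\<omega> n))"

text \<open>Holding time in state Y_n: Exp(q) with rate q = deg/mu, realised as E_n / q.\<close>
definition holding_time :: "('v::countable \<Rightarrow> 'v \<Rightarrow> real) \<Rightarrow> ('v \<Rightarrow> real) \<Rightarrow> 'v \<Rightarrow> (nat \<Rightarrow> real \<times> real) \<Rightarrow> nat \<Rightarrow> real" where
  "holding_time w \<mu> x \<omega> n =
     snd (\<omega> n) * \<mu> (jump_chain w x \<omega> n) / wdeg w (jump_chain w x \<omega> n)"

definition jump_time :: "('v::countable \<Rightarrow> 'v \<Rightarrow> real) \<Rightarrow> ('v \<Rightarrow> real) \<Rightarrow> 'v \<Rightarrow> (nat \<Rightarrow> real \<times> real) \<Rightarrow> nat \<Rightarrow> real" where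
  "jump_time w \<mu> x \<omega> n = (\<Sum>i<n. holding_time w \<mu> x \<omega> i)"

text \<open>Minimal chain started at x: state Some (Y_n) on [J_n, J_(n+1)); after explosion
  (no such n) it is in the cemetery, represented by None.\<close>
definition chain_state :: "('v::countable \<Rightarrow> 'v \<Rightarrow> real) \<Rightarrow> ('v \<Rightarrow> real) \<Rightarrow> 'v \<Rightarrow> (nat \<Rightarrow> real \<times> real) \<Rightarrow> real \<Rightarrow> 'v option" where
  "chain_state w \<mu> x \<omega> t =
     (if \<exists>n. jump_time w \<mu> x \<omega> n \<le> t \<and> t < jump_time w \<mu> x \<omega> (Suc n)
      then Some (jump_chain w x \<omega> (LEAST n. jump_time w \<mu> x \<omega> n \<le> t \<and> t < jump_time w \<mu> x \<omega> (Suc n)))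
      else None)"

definition ext_cem :: "('v \<Rightarrow> real) \<Rightarrow> 'v option \<Rightarrow> real" where
  "ext_cem f = case_option 0 f"

definition fk_semigroup :: "('v::countable \<Rightarrow> 'v \<Rightarrow> real) \<Rightarrow> ('v \<Rightarrow> real) \<Rightarrow> ('v \<Rightarrow> real) \<Rightarrow> real \<Rightarrow> ('v \<Rightarrow> real) \<Rightarrow> 'v \<Rightarrow> ennreal" where
  "fk_semigroup w \<mu> U t f x =
     (\<integral>\<^sup>+ \<omega>. ennreal (ext_cem f (chain_state w \<mu> x \<omega> t) *
              exp (- (LBINT s:{0..t}. ext_cem U (chain_state w \<mu> x \<omega> s)))) \<partial>chain_space)"

end

theory Submission
  imports Defs
begin

text \<open>Condition on the first jump of the chain. Before the holding time \<open>\<tau> = E \<mu>(x)/deg(x)\<close>,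
  \<open>E\<close> standard exponential, the chain sits at \<open>x\<close>; afterwards it restarts from a neighbour \<open>y\<close>
  chosen with probability \<open>w(x,y)/deg(x)\<close>, driven by the shifted sample sequence. Let \<open>F\<^sub>n\<close> be the
  Feynman--Kac functional cut off (set to \<open>0\<close>) after the \<open>n\<close>-th jump. The first-jump recursion and
  an explicit exponential integral show \<open>E F\<^sub>n \<le> \<phi>(x)\<close> by induction on \<open>n\<close>: the induction step
  is exactly the inequality \<open>\<Sum>\<^sub>y w(x,y) \<phi>(y) / deg(x) \<le> (1 + U(x) \<mu>(x)/deg(x)) \<phi>(x)\<close>, a
  rewriting of \<open>(\<Delta> + U) \<phi> \<ge> 0\<close> at \<open>x\<close>. The \<open>F\<^sub>n\<close> increase to the Feynman--Kac integrand before
  explosion, and the integrand vanishes in the cemetery, so monotone convergence concludes.\<close>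

lemma simple_weighted_graphD:
  assumes "simple_weighted_graph w \<mu>"
  shows "finite (nbrs w x)" "nbrs w x \<noteq> {}" "0 < wdeg w x" "0 < \<mu> x" "0 \<le> w x y"
proof -
  note G = assms[unfolded simple_weighted_graph_def]
  show fin: "finite (nbrs w x)" unfolding nbrs_def using G by blast
  show "0 < \<mu> x" "0 \<le> w x y" using G by simp_all
  have "infinite (UNIV - {x})" using G by (intro Diff_infinite_finite) auto
  then obtain y where "y \<noteq> x" by (metis Diff_iff infinite_imp_nonempty ex_in_conv singletonI)
  moreover have "(\<lambda>a b. 0 < w a b)\<^sup>*\<^sup>* x y" using G by blast
  ultimately obtain z where "0 < w x z" by (metis converse_rtranclpE)
  then show ne: "nbrs w x \<noteq> {}" by (auto simp: nbrs_def)
  show "0 < wdeg w x"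
    unfolding wdeg_def using fin ne by (intro sum_pos) (auto simp: nbrs_def)
qed

definition mean_holding :: "('v \<Rightarrow> 'v \<Rightarrow> real) \<Rightarrow> ('v \<Rightarrow> real) \<Rightarrow> 'v \<Rightarrow> real" where
  "mean_holding w \<mu> x = \<mu> x / wdeg w x"

lemma mean_holding_pos: "simple_weighted_graph w \<mu> \<Longrightarrow> 0 < mean_holding w \<mu> x"
  by (simp add: mean_holding_def simple_weighted_graphD)

lemma laplacian_supersolution_iff_jump_average:
  assumes G: "simple_weighted_graph w \<mu>"
  shows "0 \<le> graph_laplacian w \<mu> \<phi> x + U x * \<phi> x \<longleftrightarrow>
    (\<Sum>y\<in>nbrs w x. w x y * \<phi> y) / wdeg w x \<le> (1 + U x * mean_holding w \<mu> x) * \<phi> x"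
proof -
  have d: "0 < wdeg w x" and m: "0 < \<mu> x" using simple_weighted_graphD[OF G] by auto
  define S where "S = (\<Sum>y\<in>nbrs w x. w x y * \<phi> y)"
  have "(\<Sum>y\<in>nbrs w x. w x y * (\<phi> x - \<phi> y)) = wdeg w x * \<phi> x - S"
    by (simp add: S_def wdeg_def algebra_simps sum_subtractf sum_distrib_left)
  then have L: "graph_laplacian w \<mu> \<phi> x = (wdeg w x * \<phi> x - S) / \<mu> x"
    by (simp add: graph_laplacian_def)
  have "graph_laplacian w \<mu> \<phi> x + U x * \<phi> x
      = wdeg w x / \<mu> x * ((1 + U x * mean_holding w \<mu> x) * \<phi> x - S / wdeg w x)"
    unfolding L using d m by (simp add: mean_holding_def field_simps)
  then show ?thesis using d m by (simp add: S_def zero_le_mult_iff zero_le_divide_iff)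
qed

subsection \<open>The jump step\<close>

text \<open>\<open>jump_next w x u\<close> is the neighbour \<open>y\<close> with \<open>u \<in> [cum_prob_before w x y, cum_prob w x y)\<close>,
  an interval of length \<open>w(x,y)/deg(x)\<close>; only \<open>u = 1\<close> falls outside all of them.\<close>

definition cum_prob_before :: "('v::countable \<Rightarrow> 'v \<Rightarrow> real) \<Rightarrow> 'v \<Rightarrow> 'v \<Rightarrow> real" where
  "cum_prob_before w x y = (\<Sum>z\<in>{z\<in>nbrs w x. to_nat z < to_nat y}. w x z) / wdeg w x"

lemma cum_prob_eq_before_plus:
  assumes "finite (nbrs w x)" "y \<in> nbrs w x"
  shows "cum_prob w x y = cum_prob_before w x y + w x y / wdeg w x"
proof -
  have "{z\<in>nbrs w x. to_nat z \<le> to_nat y} = insert y {z\<in>nbrs w x. to_nat z < to_nat y}"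
    using assms(2) by (auto simp: order_le_less)
  then show ?thesis
    using assms(1) by (simp add: cum_prob_def cum_prob_before_def add_divide_distrib)
qed

lemma cum_prob_of_to_nat_max:
  assumes "m \<in> B" "\<And>z. z \<in> B \<Longrightarrow> to_nat z \<le> to_nat m" "B \<subseteq> nbrs w x"
    "\<And>z. z \<in> nbrs w x \<Longrightarrow> to_nat z \<le> to_nat m \<Longrightarrow> z \<in> B"
  shows "cum_prob w x m = (\<Sum>z\<in>B. w x z) / wdeg w x"
proof -
  have "{z\<in>nbrs w x. to_nat z \<le> to_nat m} = B" using assms by auto
  then show ?thesis unfolding cum_prob_def by simp
qed

lemma obtain_to_nat_max:
  fixes B :: "'v::countable set"
  assumes "finite B" "B \<noteq> {}"
  obtains m where "m \<in> B" "\<And>z. z \<in> B \<Longrightarrow> to_nat z \<le> to_nat m"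
proof -
  have "Max (to_nat ` B) \<in> to_nat ` B" using assms by simp
  then obtain m where "m \<in> B" "to_nat m = Max (to_nat ` B)" by auto
  then show ?thesis using that assms by auto
qed

lemma jump_next_cases:
  assumes G: "simple_weighted_graph w \<mu>" and u: "0 \<le> u"
  obtains (neighbour) "jump_next w x u \<in> nbrs w x"
      "cum_prob_before w x (jump_next w x u) \<le> u" "u < cum_prob w x (jump_next w x u)"
    | (stay) "jump_next w x u = x" "1 \<le> u"
proof (cases "\<exists>y\<in>nbrs w x. u < cum_prob w x y")
  case True
  define P where "P k \<longleftrightarrow> (\<exists>y\<in>nbrs w x. to_nat y = k \<and> u < cum_prob w x y)" for k
  have "\<exists>k. P k" using True by (auto simp: P_def)
  then have "P (LEAST k. P k)" by (rule LeastI_ex)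
  then obtain y where y: "y \<in> nbrs w x" "to_nat y = (LEAST k. P k)" "u < cum_prob w x y"
    by (auto simp: P_def)
  have jn: "jump_next w x u = y"
    using True y unfolding jump_next_def P_def[symmetric] by (metis from_nat_to_nat)
  have earlier: "\<not> u < cum_prob w x z" if "z \<in> nbrs w x" "to_nat z < to_nat y" for z
  proof
    assume "u < cum_prob w x z"
    then have "P (to_nat z)" using that by (auto simp: P_def)
    then show False using not_less_Least that y(2) by metis
  qed
  define B where "B = {z\<in>nbrs w x. to_nat z < to_nat y}"
  have "cum_prob_before w x y \<le> u"
  proof (cases "B = {}")
    case True
    then show ?thesis using u by (simp add: cum_prob_before_def B_def[symmetric])
  next
    case False
    have fB: "finite B" using simple_weighted_graphD[OF G] by (auto simp: B_def)
    obtain m where m: "m \<in> B" "\<And>z. z \<in> B \<Longrightarrow> to_nat z \<le> to_nat m"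
      using obtain_to_nat_max[OF fB False] by blast
    have "cum_prob w x m = (\<Sum>z\<in>B. w x z) / wdeg w x"
      using m by (intro cum_prob_of_to_nat_max) (auto simp: B_def)
    moreover have "\<not> u < cum_prob w x m" using m earlier by (auto simp: B_def)
    ultimately show ?thesis by (simp add: cum_prob_before_def B_def[symmetric])
  qed
  then show ?thesis using jn y by (intro neighbour) simp_all
next
  case False
  have fin: "finite (nbrs w x)" and ne: "nbrs w x \<noteq> {}" and d: "0 < wdeg w x"
    using simple_weighted_graphD[OF G] by auto
  obtain m where m: "m \<in> nbrs w x" "\<And>z. z \<in> nbrs w x \<Longrightarrow> to_nat z \<le> to_nat m"
    using obtain_to_nat_max[OF fin ne] by blast
  have "cum_prob w x m = 1"
    using m d by (subst cum_prob_of_to_nat_max[of m "nbrs w x"]) (auto simp: wdeg_def)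
  moreover have "\<not> u < cum_prob w x m" using False m(1) by blast
  ultimately have "1 \<le> u" by simp
  moreover have "jump_next w x u = x" using False by (simp add: jump_next_def)
  ultimately show ?thesis by (intro stay)
qed

lemma measurable_jump_next[measurable]: "jump_next w x \<in> borel \<rightarrow>\<^sub>M count_space UNIV"
  unfolding jump_next_def by measurable

abbreviation unif01 :: "real measure" where
  "unif01 \<equiv> uniform_measure lborel {0..1}"

abbreviation exp1 :: "real measure" where
  "exp1 \<equiv> density lborel (exponential_density 1)"

lemma nn_integral_jump_next_le:
  assumes G: "simple_weighted_graph w \<mu>" and \<phi>: "\<And>y. 0 \<le> \<phi> y"
  shows "(\<integral>\<^sup>+u. ennreal (\<phi> (jump_next w x u)) \<partial>unif01)
     \<le> ennreal ((\<Sum>y\<in>nbrs w x. w x y * \<phi> y) / wdeg w x)"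
proof -
  have fin: "finite (nbrs w x)" and d: "0 < wdeg w x" and wpos: "\<And>y. 0 \<le> w x y"
    using simple_weighted_graphD[OF G] by auto
  let ?I = "\<lambda>y. {cum_prob_before w x y..<cum_prob w x y}"
  let ?R = "\<lambda>u. (\<Sum>y\<in>nbrs w x. ennreal (\<phi> y) * indicator (?I y) u) + ennreal (\<phi> x) * indicator {1} u"
  have pointwise: "ennreal (\<phi> (jump_next w x u)) * indicator {0..1} u \<le> ?R u" for u :: real
  proof (cases "u \<in> {0..1}")
    case True
    then have "0 \<le> u" by simp
    show ?thesis
    proof (rule jump_next_cases[OF G \<open>0 \<le> u\<close>, of x])
      assume nb: "jump_next w x u \<in> nbrs w x" "cum_prob_before w x (jump_next w x u) \<le> u"
        "u < cum_prob w x (jump_next w x u)"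
      have "ennreal (\<phi> (jump_next w x u)) * indicator {0..1} u
          = ennreal (\<phi> (jump_next w x u)) * indicator (?I (jump_next w x u)) u"
        using True nb by simp
      also have "\<dots> \<le> (\<Sum>y\<in>nbrs w x. ennreal (\<phi> y) * indicator (?I y) u)"
        using nb fin by (intro member_le_sum) auto
      finally show ?thesis by (simp add: add_increasing2)
    next
      assume stay: "jump_next w x u = x" "1 \<le> u"
      then have "u = 1" using True by simp
      then show ?thesis using stay by (simp add: add_increasing)
    qed
  qed simp
  have interval: "ennreal (\<phi> y) * emeasure lborel (?I y) = ennreal (w x y * \<phi> y / wdeg w x)"
    if "y \<in> nbrs w x" for y
  proof -
    have "cum_prob w x y - cum_prob_before w x y = w x y / wdeg w x"
      using cum_prob_eq_before_plus[OF fin that] by simp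
    moreover have "0 \<le> w x y / wdeg w x" using wpos[of y] d by simp
    ultimately have "emeasure lborel (?I y) = ennreal (w x y / wdeg w x)"
      by (subst emeasure_lborel_Ico) auto
    then show ?thesis using \<phi>[of y] wpos[of y] d by (simp add: ennreal_mult'[symmetric] mult.commute)
  qed
  have "(\<integral>\<^sup>+u. ennreal (\<phi> (jump_next w x u)) \<partial>unif01)
      = (\<integral>\<^sup>+u. ennreal (\<phi> (jump_next w x u)) * indicator {0..1} u \<partial>lborel)"
    by (subst nn_integral_uniform_measure) (auto simp: divide_ennreal_def)
  also have "\<dots> \<le> (\<integral>\<^sup>+u. ?R u \<partial>lborel)"
    by (intro nn_integral_mono pointwise)
  also have "\<dots> = (\<Sum>y\<in>nbrs w x. ennreal (\<phi> y) * emeasure lborel (?I y))"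
    by (simp add: nn_integral_add nn_integral_sum nn_integral_cmult_indicator)
  also have "\<dots> = (\<Sum>y\<in>nbrs w x. ennreal (w x y * \<phi> y / wdeg w x))"
    using interval by simp
  also have "\<dots> = ennreal (\<Sum>y\<in>nbrs w x. w x y * \<phi> y / wdeg w x)"
    using \<phi> wpos d by (intro sum_ennreal) auto
  finally show ?thesis by (simp add: sum_divide_distrib)
qed

subsection \<open>Exponential holding times\<close>

lemma nn_integral_exp_tail:
  assumes "0 \<le> C"
  shows "(\<integral>\<^sup>+e. ennreal (C * exp (- e)) * indicator {s..} e \<partial>lborel) = ennreal (C * exp (- s))"
proof -
  have "((\<lambda>e::real. - C * exp (- e)) \<longlongrightarrow> - C * 0) at_top"
    by (intro tendsto_mult tendsto_const filterlim_compose[OF exp_at_bot filterlim_uminus_at_bot_at_top])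
  then have "(\<integral>\<^sup>+e. ennreal (C * exp (- e)) * indicator {s..} e \<partial>lborel) = ennreal (0 - - C * exp (- s))"
    using assms by (intro nn_integral_FTC_atLeast) (auto intro!: derivative_eq_intros)
  then show ?thesis by simp
qed

lemma nn_integral_exp_decay_Icc:
  assumes "0 \<le> a * b" "0 \<le> s"
  shows "(\<integral>\<^sup>+e. ennreal (a * b * exp (- (a * e))) * indicator {0..s} e \<partial>lborel)
    = ennreal (b - b * exp (- (a * s)))"
proof -
  have "(\<integral>\<^sup>+e. ennreal (a * b * exp (- (a * e))) * indicator {0..s} e \<partial>lborel)
      = ennreal (- b * exp (- (a * s)) - - b * exp (- (a * 0)))"
    using assms by (intro nn_integral_FTC_Icc) (auto intro!: derivative_eq_intros)
  then show ?thesis by simp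
qed

lemma first_jump_integrand_le:
  fixes c t e P V ph :: real
  defines "a \<equiv> 1 + V * c"
  assumes c: "0 < c" and P: "0 \<le> P" "P \<le> a * ph"
  shows "ennreal (exponential_density 1 e) *
      (if t < e * c then ennreal (ph * exp (- (V * t))) else ennreal (exp (- (V * (e * c)))) * ennreal P)
    \<le> ennreal (ph * exp (- (V * t)) * exp (- e)) * indicator {t / c..} e
      + ennreal (a * ph * exp (- (a * e))) * indicator {0..t / c} e"
proof (cases "e < 0")
  case False
  then have dens: "exponential_density 1 e = exp (- e)" by (simp add: exponential_density_def)
  show ?thesis
  proof (cases "t < e * c")
    case True
    then have "t / c \<le> e" using c by (simp add: pos_divide_le_eq)
    with True show ?thesis
      using dens by (simp add: ennreal_mult'[symmetric] mult.commute add_increasing2)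
  next
    case False
    then have "e \<le> t / c" using c by (simp add: pos_le_divide_eq)
    have "exp (- e) * exp (- (V * (e * c))) = exp (- (a * e))"
      by (simp add: a_def exp_add[symmetric] algebra_simps)
    then have "ennreal (exponential_density 1 e) * (ennreal (exp (- (V * (e * c)))) * ennreal P)
        = ennreal (exp (- (a * e)) * P)"
      using dens P by (simp add: ennreal_mult'[symmetric] mult.assoc)
    also have "\<dots> \<le> ennreal (a * ph * exp (- (a * e))) * indicator {0..t / c} e"
      using P \<open>e \<le> t / c\<close> \<open>\<not> e < 0\<close> by (simp add: mult.commute ennreal_leI)
    finally show ?thesis using False by (simp add: add_increasing)
  qed
qed (simp add: exponential_density_def)

text \<open>With \<open>\<tau> = c E\<close> and \<open>E\<close> standard exponential, this reads
  \<open>ph e\<^sup>-\<^sup>V\<^sup>t Pr(\<tau> > t) + P E[e\<^sup>-\<^sup>V\<^sup>\<tau>; \<tau> \<le> t] \<le> ph\<close>.\<close>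

lemma nn_integral_first_jump_le:
  fixes c t P V ph :: real
  assumes c: "0 < c" and t: "0 \<le> t" and P: "0 \<le> P" "P \<le> (1 + V * c) * ph" and ph: "0 \<le> ph"
  shows "(\<integral>\<^sup>+e. (if t < e * c then ennreal (ph * exp (- (V * t)))
             else ennreal (exp (- (V * (e * c)))) * ennreal P) \<partial>exp1)
         \<le> ennreal ph"
proof -
  define a where "a = 1 + V * c"
  define s where "s = t / c"
  have s: "0 \<le> s" using c t by (simp add: s_def)
  have aph: "0 \<le> a * ph" using P by (simp add: a_def)
  have tail_exp: "exp (- (V * t)) * exp (- s) = exp (- (a * s))"
    using c by (simp add: a_def s_def exp_add[symmetric] field_simps)
  have "ph * exp (- (a * s)) \<le> ph"
    using ph aph s by (cases "ph = 0") (auto simp: zero_le_mult_iff mult_left_le)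
  then have sum: "ennreal (ph * exp (- (V * t)) * exp (- s)) + ennreal (ph - ph * exp (- (a * s))) = ennreal ph"
    using ph tail_exp by (simp add: ennreal_plus[symmetric] mult.assoc del: ennreal_plus)
  have "(\<integral>\<^sup>+e. (if t < e * c then ennreal (ph * exp (- (V * t)))
             else ennreal (exp (- (V * (e * c)))) * ennreal P) \<partial>exp1)
      = (\<integral>\<^sup>+e. ennreal (exponential_density 1 e) * (if t < e * c then ennreal (ph * exp (- (V * t)))
             else ennreal (exp (- (V * (e * c)))) * ennreal P) \<partial>lborel)"
    by (subst nn_integral_density) auto
  also have "\<dots> \<le> (\<integral>\<^sup>+e. ennreal (ph * exp (- (V * t)) * exp (- e)) * indicator {s..} e
                        + ennreal (a * ph * exp (- (a * e))) * indicator {0..s} e \<partial>lborel)"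
    unfolding s_def a_def using c P by (intro nn_integral_mono first_jump_integrand_le) auto
  also have "\<dots> = (\<integral>\<^sup>+e. ennreal (ph * exp (- (V * t)) * exp (- e)) * indicator {s..} e \<partial>lborel)
                  + (\<integral>\<^sup>+e. ennreal (a * ph * exp (- (a * e))) * indicator {0..s} e \<partial>lborel)"
    by (rule nn_integral_add) auto
  also have "\<dots> = ennreal ph"
    using ph aph s by (simp add: nn_integral_exp_tail nn_integral_exp_decay_Icc sum)
  finally show ?thesis .
qed

definition step_measure :: "(real \<times> real) measure" where
  "step_measure = unif01 \<Otimes>\<^sub>M exp1"

lemma chain_space_eq_PiM: "chain_space = PiM UNIV (\<lambda>_. step_measure)"
  by (simp add: chain_space_def step_measure_def)

lemma sets_step_measure[measurable_cong]: "sets step_measure = sets (borel \<Otimes>\<^sub>M borel)"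
  unfolding step_measure_def by (intro sets_pair_measure_cong) auto

lemma prob_space_unif01: "prob_space unif01"
  by (intro prob_space_uniform_measure) auto

lemma prob_space_exp1: "prob_space exp1"
  by (intro prob_space_exponential_density) auto

interpretation unif_exp: pair_prob_space unif01 exp1
  using prob_space_unif01 prob_space_exp1
  by (simp add: pair_prob_space_def pair_sigma_finite_def prob_space_imp_sigma_finite)

interpretation samples: sequence_space step_measure
  using unif_exp.prob_space_axioms
  by (simp add: sequence_space_def product_prob_space_def product_sigma_finite_def
      prob_space_imp_sigma_finite product_prob_space_axioms_def step_measure_def)

lemma prob_space_chain_space: "prob_space chain_space"
  using samples.prob_space_axioms by (simp add: chain_space_eq_PiM)

lemma measurable_sample[measurable]: "(\<lambda>\<omega>. \<omega> i) \<in> chain_space \<rightarrow>\<^sub>M borel \<Otimes>\<^sub>M borel"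
  unfolding chain_space_eq_PiM by measurable

lemma measurable_shift[measurable]: "(\<lambda>\<omega> k. \<omega> (Suc k)) \<in> chain_space \<rightarrow>\<^sub>M chain_space"
  unfolding chain_space_eq_PiM by (rule measurable_PiM_single') (auto simp: space_PiM)

text \<open>The samples are i.i.d., so the chain space is the product of the first sample and the
  shifted sequence; this is the strong Markov property at the first jump.\<close>

lemma nn_integral_chain_space_first_sample:
  assumes f: "f \<in> borel_measurable chain_space"
  shows "(\<integral>\<^sup>+\<omega>. f \<omega> \<partial>chain_space)
    = (\<integral>\<^sup>+s. (\<integral>\<^sup>+\<omega>. f (case_nat s \<omega>) \<partial>chain_space) \<partial>step_measure)"
proof -
  have S: "samples.S = chain_space" by (simp add: chain_space_eq_PiM)
  have m: "(\<lambda>(s, \<omega>). case_nat s \<omega>) \<in> step_measure \<Otimes>\<^sub>M samples.S \<rightarrow>\<^sub>M samples.S" by measurable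
  have "(\<integral>\<^sup>+\<omega>. f \<omega> \<partial>chain_space)
      = (\<integral>\<^sup>+\<omega>. f \<omega> \<partial>distr (step_measure \<Otimes>\<^sub>M samples.S) samples.S (\<lambda>(s, \<omega>). case_nat s \<omega>))"
    using samples.PiM_iter unfolding S by simp
  also have "\<dots> = (\<integral>\<^sup>+p. f (case_prod case_nat p) \<partial>(step_measure \<Otimes>\<^sub>M samples.S))"
    using f m by (subst nn_integral_distr) (auto simp: S)
  also have "\<dots> = (\<integral>\<^sup>+s. (\<integral>\<^sup>+\<omega>. f (case_nat s \<omega>) \<partial>samples.S) \<partial>step_measure)"
    using f m by (subst samples.P.nn_integral_fst[symmetric]) (auto simp: S)
  finally show ?thesis by (simp add: S)
qed

subsection \<open>The functional truncated after \<open>n\<close> jumps\<close>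

primrec fk_trunc ::
  "('v::countable \<Rightarrow> 'v \<Rightarrow> real) \<Rightarrow> ('v \<Rightarrow> real) \<Rightarrow> ('v \<Rightarrow> real) \<Rightarrow> ('v \<Rightarrow> real) \<Rightarrow>
    nat \<Rightarrow> 'v \<Rightarrow> real \<Rightarrow> (nat \<Rightarrow> real \<times> real) \<Rightarrow> ennreal" where
  "fk_trunc w \<mu> U \<phi> 0 x t \<omega> = 0"
| "fk_trunc w \<mu> U \<phi> (Suc n) x t \<omega> =
    (if t < snd (\<omega> 0) * mean_holding w \<mu> x then ennreal (\<phi> x * exp (- (U x * t)))
     else ennreal (exp (- (U x * (snd (\<omega> 0) * mean_holding w \<mu> x)))) *
       fk_trunc w \<mu> U \<phi> n (jump_next w x (fst (\<omega> 0))) (t - snd (\<omega> 0) * mean_holding w \<mu> x)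
         (\<lambda>k. \<omega> (Suc k)))"

lemma measurable_fk_trunc:
  "(\<lambda>p. fk_trunc w \<mu> U \<phi> n x (fst p) (snd p)) \<in> borel_measurable (borel \<Otimes>\<^sub>M chain_space)"
proof (induction n arbitrary: x)
  case (Suc n)
  have "(\<lambda>p. fk_trunc w \<mu> U \<phi> n y (fst p - snd (snd p 0) * mean_holding w \<mu> x) (\<lambda>k. snd p (Suc k)))
      \<in> borel_measurable (borel \<Otimes>\<^sub>M chain_space)" for y
  proof -
    have "(\<lambda>p. (fst p - snd (snd p 0) * mean_holding w \<mu> x, \<lambda>k. snd p (Suc k)))
        \<in> borel \<Otimes>\<^sub>M chain_space \<rightarrow>\<^sub>M borel \<Otimes>\<^sub>M chain_space"
      by measurable
    from measurable_comp[OF this Suc.IH[of y]] show ?thesis by (simp add: comp_def)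
  qed
  moreover have "(\<lambda>p. jump_next w x (fst (snd p 0))) \<in> borel \<Otimes>\<^sub>M chain_space \<rightarrow>\<^sub>M count_space UNIV"
    by measurable
  ultimately have [measurable]:
    "(\<lambda>p. fk_trunc w \<mu> U \<phi> n (jump_next w x (fst (snd p 0)))
       (fst p - snd (snd p 0) * mean_holding w \<mu> x) (\<lambda>k. snd p (Suc k)))
      \<in> borel_measurable (borel \<Otimes>\<^sub>M chain_space)"
    by (rule measurable_compose_countable)
  show ?case unfolding fk_trunc.simps by measurable
qed simp

lemma measurable_fk_trunc_at[measurable]:
  "fk_trunc w \<mu> U \<phi> n x t \<in> borel_measurable chain_space"
proof -
  have "(\<lambda>\<omega>. (t, \<omega>)) \<in> chain_space \<rightarrow>\<^sub>M borel \<Otimes>\<^sub>M chain_space" by measurable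
  from measurable_comp[OF this measurable_fk_trunc] show ?thesis by (simp add: comp_def)
qed

lemma fk_trunc_mono: "fk_trunc w \<mu> U \<phi> n x t \<omega> \<le> fk_trunc w \<mu> U \<phi> (Suc n) x t \<omega>"
proof (induction n arbitrary: x t \<omega>)
  case (Suc n)
  show ?case
    using Suc.IH[of "jump_next w x (fst (\<omega> 0))" "t - snd (\<omega> 0) * mean_holding w \<mu> x" "\<lambda>k. \<omega> (Suc k)"]
    by (subst (1 2) fk_trunc.simps(2)) (auto intro: mult_left_mono simp del: fk_trunc.simps)
qed simp

lemma nn_integral_fk_trunc_Suc_le:
  fixes w :: "'v::countable \<Rightarrow> 'v \<Rightarrow> real" and \<mu> \<phi> :: "'v \<Rightarrow> real" and x :: 'v
  defines "c \<equiv> mean_holding w \<mu> x" and "P \<equiv> (\<Sum>y\<in>nbrs w x. w x y * \<phi> y) / wdeg w x"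
  assumes G: "simple_weighted_graph w \<mu>" and \<phi>: "\<And>y. 0 \<le> \<phi> y" and t: "0 \<le> t"
    and bound: "\<And>y s. 0 \<le> s \<Longrightarrow> (\<integral>\<^sup>+\<omega>. fk_trunc w \<mu> U \<phi> n y s \<omega> \<partial>chain_space) \<le> ennreal (\<phi> y)"
  shows "(\<integral>\<^sup>+\<omega>. fk_trunc w \<mu> U \<phi> (Suc n) x t \<omega> \<partial>chain_space)
    \<le> (\<integral>\<^sup>+e. (if t < e * c then ennreal (\<phi> x * exp (- (U x * t)))
              else ennreal (exp (- (U x * (e * c)))) * ennreal P) \<partial>exp1)"
proof -
  define A where "A = ennreal (\<phi> x * exp (- (U x * t)))"
  define h where "h s = (if t < snd s * c then A
      else ennreal (exp (- (U x * (snd s * c)))) * ennreal (\<phi> (jump_next w x (fst s))))" for s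
  have "h \<in> borel_measurable (borel \<Otimes>\<^sub>M borel)" unfolding h_def by measurable
  then have [measurable]: "h \<in> borel_measurable step_measure"
    by (simp add: measurable_cong_sets[OF sets_step_measure refl])
  have first_sample: "(\<integral>\<^sup>+\<omega>. fk_trunc w \<mu> U \<phi> (Suc n) x t (case_nat s \<omega>) \<partial>chain_space) \<le> h s" for s
  proof (cases "t < snd s * c")
    case True
    then show ?thesis
      using prob_space.emeasure_space_1[OF prob_space_chain_space] by (simp add: h_def A_def c_def)
  next
    case False
    let ?y = "jump_next w x (fst s)"
    have "(\<integral>\<^sup>+\<omega>. fk_trunc w \<mu> U \<phi> (Suc n) x t (case_nat s \<omega>) \<partial>chain_space)
        = ennreal (exp (- (U x * (snd s * c)))) * (\<integral>\<^sup>+\<omega>. fk_trunc w \<mu> U \<phi> n ?y (t - snd s * c) \<omega> \<partial>chain_space)"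
      using False by (simp add: c_def nn_integral_cmult)
    also have "\<dots> \<le> ennreal (exp (- (U x * (snd s * c)))) * ennreal (\<phi> ?y)"
      using False by (intro mult_left_mono bound) auto
    finally show ?thesis using False by (simp add: h_def)
  qed
  have "(\<integral>\<^sup>+\<omega>. fk_trunc w \<mu> U \<phi> (Suc n) x t \<omega> \<partial>chain_space)
      = (\<integral>\<^sup>+s. (\<integral>\<^sup>+\<omega>. fk_trunc w \<mu> U \<phi> (Suc n) x t (case_nat s \<omega>) \<partial>chain_space) \<partial>step_measure)"
    by (rule nn_integral_chain_space_first_sample) measurable
  also have "\<dots> \<le> (\<integral>\<^sup>+s. h s \<partial>step_measure)"
    by (intro nn_integral_mono first_sample)
  also have "\<dots> = (\<integral>\<^sup>+e. (\<integral>\<^sup>+u. h (u, e) \<partial>unif01) \<partial>exp1)"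
    unfolding step_measure_def by (rule unif_exp.nn_integral_snd[symmetric]) (simp add: step_measure_def[symmetric])
  also have "\<dots> \<le> (\<integral>\<^sup>+e. (if t < e * c then A else ennreal (exp (- (U x * (e * c)))) * ennreal P) \<partial>exp1)"
  proof (intro nn_integral_mono)
    fix e
    have "(\<integral>\<^sup>+u. ennreal (exp (- (U x * (e * c)))) * ennreal (\<phi> (jump_next w x u)) \<partial>unif01)
        \<le> ennreal (exp (- (U x * (e * c)))) * ennreal P"
      unfolding P_def using nn_integral_jump_next_le[OF G, where \<phi> = \<phi>, OF \<phi>]
      by (simp add: nn_integral_cmult mult_left_mono)
    then show "(\<integral>\<^sup>+u. h (u, e) \<partial>unif01) \<le> (if t < e * c then A else ennreal (exp (- (U x * (e * c)))) * ennreal P)"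
      using prob_space.emeasure_space_1[OF prob_space_unif01] by (simp add: h_def)
  qed
  finally show ?thesis unfolding A_def .
qed

lemma nn_integral_fk_trunc_le:
  assumes G: "simple_weighted_graph w \<mu>" and \<phi>: "\<And>y. 0 \<le> \<phi> y"
    and super: "\<And>x. 0 \<le> graph_laplacian w \<mu> \<phi> x + U x * \<phi> x" and t: "0 \<le> t"
  shows "(\<integral>\<^sup>+\<omega>. fk_trunc w \<mu> U \<phi> n x t \<omega> \<partial>chain_space) \<le> ennreal (\<phi> x)"
  using t
proof (induction n arbitrary: x t)
  case 0
  have "fk_trunc w \<mu> U \<phi> 0 x t = (\<lambda>_. 0)" by auto
  then show ?case by simp
next
  case (Suc n)
  define P where "P = (\<Sum>y\<in>nbrs w x. w x y * \<phi> y) / wdeg w x"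
  have P: "0 \<le> P"
    unfolding P_def using \<phi> simple_weighted_graphD[OF G]
    by (intro divide_nonneg_pos sum_nonneg mult_nonneg_nonneg) auto
  have jump_average: "P \<le> (1 + U x * mean_holding w \<mu> x) * \<phi> x"
    unfolding P_def using laplacian_supersolution_iff_jump_average[OF G] super by blast
  have "(\<integral>\<^sup>+\<omega>. fk_trunc w \<mu> U \<phi> (Suc n) x t \<omega> \<partial>chain_space)
      \<le> (\<integral>\<^sup>+e. (if t < e * mean_holding w \<mu> x then ennreal (\<phi> x * exp (- (U x * t)))
              else ennreal (exp (- (U x * (e * mean_holding w \<mu> x)))) * ennreal P) \<partial>exp1)"
    unfolding P_def by (rule nn_integral_fk_trunc_Suc_le[OF G \<phi> Suc.prems]) (rule Suc.IH)
  also have "\<dots> \<le> ennreal (\<phi> x)"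
    by (rule nn_integral_first_jump_le[OF mean_holding_pos[OF G] Suc.prems P jump_average \<phi>])
  finally show ?case .
qed

subsection \<open>The path after the first jump\<close>

lemma jump_chain_Suc_shift:
  "jump_chain w x \<omega> (Suc k) = jump_chain w (jump_next w x (fst (\<omega> 0))) (\<lambda>k. \<omega> (Suc k)) k"
  by (induction k) auto

lemma jump_time_Suc_shift:
  "jump_time w \<mu> x \<omega> (Suc k)
    = snd (\<omega> 0) * mean_holding w \<mu> x + jump_time w \<mu> (jump_next w x (fst (\<omega> 0))) (\<lambda>k. \<omega> (Suc k)) k"
proof -
  have "holding_time w \<mu> x \<omega> (Suc i) = holding_time w \<mu> (jump_next w x (fst (\<omega> 0))) (\<lambda>k. \<omega> (Suc k)) i" for i
    unfolding holding_time_def jump_chain_Suc_shift by simp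
  moreover have "holding_time w \<mu> x \<omega> 0 = snd (\<omega> 0) * mean_holding w \<mu> x"
    by (simp add: holding_time_def mean_holding_def)
  ultimately show ?thesis by (simp only: jump_time_def sum.lessThan_Suc_shift)
qed

lemma chain_state_before_first_jump:
  assumes "0 \<le> s" "s < snd (\<omega> 0) * mean_holding w \<mu> x"
  shows "chain_state w \<mu> x \<omega> s = Some x"
proof -
  have first: "jump_time w \<mu> x \<omega> 0 \<le> s \<and> s < jump_time w \<mu> x \<omega> (Suc 0)"
    using assms by (simp add: jump_time_def holding_time_def mean_holding_def)
  then have "(LEAST n. jump_time w \<mu> x \<omega> n \<le> s \<and> s < jump_time w \<mu> x \<omega> (Suc n)) = 0"
    by (intro Least_eq_0)
  then show ?thesis using first by (auto simp: chain_state_def)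
qed

lemma chain_state_after_first_jump:
  assumes "snd (\<omega> 0) * mean_holding w \<mu> x \<le> s"
  shows "chain_state w \<mu> x \<omega> s = chain_state w \<mu> (jump_next w x (fst (\<omega> 0))) (\<lambda>k. \<omega> (Suc k))
    (s - snd (\<omega> 0) * mean_holding w \<mu> x)"
proof -
  define y where "y = jump_next w x (fst (\<omega> 0))"
  define \<omega>' where "\<omega>' = (\<lambda>k. \<omega> (Suc k))"
  define s' where "s' = s - snd (\<omega> 0) * mean_holding w \<mu> x"
  define P where "P n \<longleftrightarrow> jump_time w \<mu> x \<omega> n \<le> s \<and> s < jump_time w \<mu> x \<omega> (Suc n)" for n
  define Q where "Q m \<longleftrightarrow> jump_time w \<mu> y \<omega>' m \<le> s' \<and> s' < jump_time w \<mu> y \<omega>' (Suc m)" for m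
  have PQ: "P (Suc m) \<longleftrightarrow> Q m" for m
    unfolding P_def Q_def y_def \<omega>'_def s'_def jump_time_Suc_shift[of _ _ x \<omega>] by auto
  have "\<not> P 0" using assms by (simp add: P_def jump_time_def holding_time_def mean_holding_def)
  then have ex: "(\<exists>n. P n) \<longleftrightarrow> (\<exists>m. Q m)" using PQ by (metis not0_implies_Suc)
  have "chain_state w \<mu> x \<omega> s = chain_state w \<mu> y \<omega>' s'"
  proof (cases "\<exists>m. Q m")
    case True
    then obtain m where "P (Suc m)" using PQ by blast
    then have least: "(LEAST n. P n) = Suc (LEAST m. Q m)"
      using \<open>\<not> P 0\<close> unfolding PQ[symmetric] by (rule Least_Suc)
    have "chain_state w \<mu> x \<omega> s = Some (jump_chain w x \<omega> (LEAST n. P n))"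
      using True ex unfolding chain_state_def P_def by auto
    also have "\<dots> = Some (jump_chain w y \<omega>' (LEAST m. Q m))"
      unfolding least jump_chain_Suc_shift y_def \<omega>'_def ..
    also have "\<dots> = chain_state w \<mu> y \<omega>' s'"
      using True unfolding chain_state_def Q_def by auto
    finally show ?thesis .
  next
    case False
    then show ?thesis using ex unfolding chain_state_def P_def[symmetric] Q_def[symmetric] by simp
  qed
  then show ?thesis by (simp add: y_def \<omega>'_def s'_def)
qed

lemma measurable_chain_state[measurable]: "chain_state w \<mu> x \<omega> \<in> borel \<rightarrow>\<^sub>M count_space UNIV"
  unfolding chain_state_def by measurable

lemma set_integrable_potential_along_path:
  assumes C: "\<forall>v. \<bar>U v\<bar> \<le> C" and A: "A \<in> sets borel" "emeasure lborel A < \<infinity>"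
  shows "set_integrable lborel A (\<lambda>s. ext_cem U (chain_state w \<mu> x \<omega> s))"
  unfolding set_integrable_def
proof (rule integrableI_bounded_set_indicator[where B = C])
  have "\<bar>ext_cem U v\<bar> \<le> C" for v
    using C spec[OF C, of x] by (cases v) (auto simp: ext_cem_def)
  then show "AE s in lborel. s \<in> A \<longrightarrow> norm (ext_cem U (chain_state w \<mu> x \<omega> s)) \<le> C" by simp
qed (use A in \<open>auto simp: ext_cem_def\<close>)

lemma set_integral_Icc_translate:
  fixes g :: "real \<Rightarrow> real"
  shows "(LBINT s:{a..b}. g (s - c)) = (LBINT s:{a - c..b - c}. g s)"
  unfolding set_lebesgue_integral_def
  by (subst lborel_integral_real_affine[where c = 1 and t = c])
     (auto intro!: Bochner_Integration.integral_cong split: split_indicator)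

lemma potential_integral_before_first_jump:
  assumes "0 \<le> t" "t < snd (\<omega> 0) * mean_holding w \<mu> x"
  shows "(LBINT s:{0..t}. ext_cem U (chain_state w \<mu> x \<omega> s)) = U x * t"
proof -
  have "(LBINT s:{0..t}. ext_cem U (chain_state w \<mu> x \<omega> s)) = (LBINT s:{0..t}. U x)"
    using assms by (intro set_lebesgue_integral_cong) (auto simp: chain_state_before_first_jump ext_cem_def)
  then show ?thesis using assms by (subst (asm) set_integral_const) auto
qed

lemma potential_integral_after_first_jump:
  fixes w :: "'v::countable \<Rightarrow> 'v \<Rightarrow> real" and \<mu> :: "'v \<Rightarrow> real" and x :: 'v and \<omega> :: "nat \<Rightarrow> real \<times> real"
  defines "\<tau> \<equiv> snd (\<omega> 0) * mean_holding w \<mu> x"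
  assumes C: "\<forall>v. \<bar>U v\<bar> \<le> C" and \<tau>: "0 \<le> \<tau>" "\<tau> \<le> t"
  shows "(LBINT s:{0..t}. ext_cem U (chain_state w \<mu> x \<omega> s))
    = U x * \<tau> + (LBINT s:{0..t - \<tau>}. ext_cem U (chain_state w \<mu> (jump_next w x (fst (\<omega> 0))) (\<lambda>k. \<omega> (Suc k)) s))"
proof -
  let ?f = "\<lambda>s. ext_cem U (chain_state w \<mu> x \<omega> s)"
  let ?g = "\<lambda>s. ext_cem U (chain_state w \<mu> (jump_next w x (fst (\<omega> 0))) (\<lambda>k. \<omega> (Suc k)) s)"
  have "{0..t} = {0..<\<tau>} \<union> {\<tau>..t}" using \<tau> by auto
  then have "(LBINT s:{0..t}. ?f s) = (LBINT s:{0..<\<tau>}. ?f s) + (LBINT s:{\<tau>..t}. ?f s)"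
    using \<tau> by (simp only:) (intro set_integral_Un set_integrable_potential_along_path[OF C]; auto)
  also have "(LBINT s:{0..<\<tau>}. ?f s) = (LBINT s:{0..<\<tau>}. U x)"
    by (intro set_lebesgue_integral_cong) (auto simp: chain_state_before_first_jump ext_cem_def \<tau>_def)
  also have "\<dots> = U x * \<tau>" using \<tau> by (subst set_integral_const) auto
  also have "(LBINT s:{\<tau>..t}. ?f s) = (LBINT s:{\<tau>..t}. ?g (s - \<tau>))"
    by (intro set_lebesgue_integral_cong) (auto simp: chain_state_after_first_jump \<tau>_def)
  also have "\<dots> = (LBINT s:{0..t - \<tau>}. ?g s)" by (subst set_integral_Icc_translate) simp
  finally show ?thesis .
qed

definition fk_integrand ::
  "('v::countable \<Rightarrow> 'v \<Rightarrow> real) \<Rightarrow> ('v \<Rightarrow> real) \<Rightarrow> ('v \<Rightarrow> real) \<Rightarrow> ('v \<Rightarrow> real) \<Rightarrow>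
    'v \<Rightarrow> real \<Rightarrow> (nat \<Rightarrow> real \<times> real) \<Rightarrow> ennreal" where
  "fk_integrand w \<mu> U \<phi> x t \<omega> = ennreal (ext_cem \<phi> (chain_state w \<mu> x \<omega> t) *
     exp (- (LBINT s:{0..t}. ext_cem U (chain_state w \<mu> x \<omega> s))))"

lemma fk_semigroup_eq_nn_integral_fk_integrand:
  "fk_semigroup w \<mu> U t \<phi> x = (\<integral>\<^sup>+\<omega>. fk_integrand w \<mu> U \<phi> x t \<omega> \<partial>chain_space)"
  unfolding fk_semigroup_def fk_integrand_def ..

lemma fk_integrand_before_first_jump:
  assumes "0 \<le> t" "t < snd (\<omega> 0) * mean_holding w \<mu> x"
  shows "fk_integrand w \<mu> U \<phi> x t \<omega> = ennreal (\<phi> x * exp (- (U x * t)))"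
  unfolding fk_integrand_def potential_integral_before_first_jump[where \<omega> = \<omega> and U = U, OF assms]
    chain_state_before_first_jump[where \<omega> = \<omega>, OF assms]
  by (simp add: ext_cem_def)

lemma fk_integrand_after_first_jump:
  fixes w :: "'v::countable \<Rightarrow> 'v \<Rightarrow> real" and \<mu> :: "'v \<Rightarrow> real" and x :: 'v and \<omega> :: "nat \<Rightarrow> real \<times> real"
  defines "\<tau> \<equiv> snd (\<omega> 0) * mean_holding w \<mu> x"
  assumes C: "\<forall>v. \<bar>U v\<bar> \<le> C" and \<phi>: "\<And>y. 0 \<le> \<phi> y" and \<tau>: "0 \<le> \<tau>" "\<tau> \<le> t"
  shows "fk_integrand w \<mu> U \<phi> x t \<omega>
    = ennreal (exp (- (U x * \<tau>))) * fk_integrand w \<mu> U \<phi> (jump_next w x (fst (\<omega> 0))) (t - \<tau>) (\<lambda>k. \<omega> (Suc k))"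
proof -
  define y where "y = jump_next w x (fst (\<omega> 0))"
  define \<omega>' where "\<omega>' = (\<lambda>k. \<omega> (Suc k))"
  define a where "a = ext_cem \<phi> (chain_state w \<mu> y \<omega>' (t - \<tau>))"
  define L where "L = (LBINT s:{0..t - \<tau>}. ext_cem U (chain_state w \<mu> y \<omega>' s))"
  have "0 \<le> a" unfolding a_def using \<phi> by (cases "chain_state w \<mu> y \<omega>' (t - \<tau>)") (auto simp: ext_cem_def)
  have "fk_integrand w \<mu> U \<phi> x t \<omega> = ennreal (a * exp (- (U x * \<tau> + L)))"
    using \<tau> unfolding fk_integrand_def a_def L_def y_def \<omega>'_def \<tau>_def
    by (simp add: chain_state_after_first_jump potential_integral_after_first_jump[OF C])
  also have "\<dots> = ennreal (exp (- (U x * \<tau>))) * ennreal (a * exp (- L))"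
    using \<open>0 \<le> a\<close> by (simp add: ennreal_mult'[symmetric] exp_add[symmetric] mult_ac)
  also have "ennreal (a * exp (- L)) = fk_integrand w \<mu> U \<phi> y (t - \<tau>) \<omega>'"
    unfolding fk_integrand_def a_def L_def ..
  finally show ?thesis by (simp add: y_def \<omega>'_def)
qed

lemma fk_integrand_eq_fk_trunc:
  assumes C: "\<forall>v. \<bar>U v\<bar> \<le> C" and \<phi>: "\<And>y. 0 \<le> \<phi> y" and G: "simple_weighted_graph w \<mu>"
    and \<omega>: "\<forall>k. 0 \<le> snd (\<omega> k)" and t: "0 \<le> t" "t < jump_time w \<mu> x \<omega> n"
  shows "fk_integrand w \<mu> U \<phi> x t \<omega> = fk_trunc w \<mu> U \<phi> n x t \<omega>"
  using \<omega> t
proof (induction n arbitrary: x t \<omega>)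
  case 0
  then show ?case by (simp add: jump_time_def)
next
  case (Suc n)
  define \<tau> where "\<tau> = snd (\<omega> 0) * mean_holding w \<mu> x"
  have "0 \<le> \<tau>" using Suc.prems(1) mean_holding_pos[OF G, of x] by (simp add: \<tau>_def)
  show ?case
  proof (cases "t < \<tau>")
    case True
    then show ?thesis using Suc.prems by (simp add: fk_integrand_before_first_jump \<tau>_def)
  next
    case False
    have "t - \<tau> < jump_time w \<mu> (jump_next w x (fst (\<omega> 0))) (\<lambda>k. \<omega> (Suc k)) n"
      using Suc.prems(3) unfolding jump_time_Suc_shift \<tau>_def by simp
    then have "fk_integrand w \<mu> U \<phi> (jump_next w x (fst (\<omega> 0))) (t - \<tau>) (\<lambda>k. \<omega> (Suc k))
        = fk_trunc w \<mu> U \<phi> n (jump_next w x (fst (\<omega> 0))) (t - \<tau>) (\<lambda>k. \<omega> (Suc k))"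
      using False Suc.prems(1) by (intro Suc.IH) auto
    then show ?thesis
      using False \<open>0 \<le> \<tau>\<close> unfolding \<tau>_def
      by (simp add: fk_integrand_after_first_jump[OF C \<phi>] del: fk_trunc.simps) simp
  qed
qed

text \<open>After explosion the chain is in the cemetery, where the integrand vanishes.\<close>

lemma fk_integrand_le_SUP_fk_trunc:
  assumes C: "\<forall>v. \<bar>U v\<bar> \<le> C" and \<phi>: "\<And>y. 0 \<le> \<phi> y" and G: "simple_weighted_graph w \<mu>"
    and \<omega>: "\<forall>k. 0 \<le> snd (\<omega> k)" and t: "0 \<le> t"
  shows "fk_integrand w \<mu> U \<phi> x t \<omega> \<le> (SUP n. fk_trunc w \<mu> U \<phi> n x t \<omega>)"
proof (cases "\<exists>n. jump_time w \<mu> x \<omega> n \<le> t \<and> t < jump_time w \<mu> x \<omega> (Suc n)")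
  case True
  then obtain n where "t < jump_time w \<mu> x \<omega> (Suc n)" by blast
  then have "fk_integrand w \<mu> U \<phi> x t \<omega> = fk_trunc w \<mu> U \<phi> (Suc n) x t \<omega>"
    using fk_integrand_eq_fk_trunc[where \<phi> = \<phi>, OF C \<phi> G \<omega> t] by blast
  then show ?thesis by (metis SUP_upper UNIV_I)
next
  case False
  then have "chain_state w \<mu> x \<omega> t = None" by (simp add: chain_state_def)
  then show ?thesis by (simp add: fk_integrand_def ext_cem_def)
qed

lemma AE_holding_times_nonneg: "AE \<omega> in chain_space. \<forall>k. 0 \<le> snd (\<omega> k)"
proof -
  have "AE e in exp1. 0 \<le> e"
    by (subst AE_density) (auto simp: exponential_density_def)
  moreover have "{p \<in> space step_measure. 0 \<le> snd p} = UNIV \<times> {0..}"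
    by (auto simp: step_measure_def space_pair_measure)
  ultimately have step: "AE p in step_measure. 0 \<le> snd p"
    unfolding step_measure_def by (intro unif_exp.AE_pair_measure) (auto simp: step_measure_def)
  have "AE \<omega> in chain_space. 0 \<le> snd (\<omega> k)" for k
    unfolding chain_space_eq_PiM using samples.AE_component[OF UNIV_I step] by simp
  then show ?thesis by (simp add: AE_all_countable)
qed

theorem proposition2p5:
  fixes w :: "'v::countable \<Rightarrow> 'v \<Rightarrow> real" and \<mu> :: "'v \<Rightarrow> real"
    and U \<phi> :: "'v \<Rightarrow> real"
  assumes "simple_weighted_graph w \<mu>"
    and "\<exists>C. \<forall>x. \<bar>U x\<bar> \<le> C"
    and "\<exists>C. \<forall>x. \<phi> x \<le> C"
    and "\<forall>x. 0 \<le> \<phi> x"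
    and "\<forall>x. graph_laplacian w \<mu> \<phi> x + U x * \<phi> x \<ge> 0"
  shows "\<forall>t\<ge>0. \<forall>x. fk_semigroup w \<mu> U t \<phi> x \<le> ennreal (\<phi> x)"
proof (intro allI impI)
  fix t :: real and x :: 'v
  assume t: "0 \<le> t"
  note G = assms(1)
  obtain C where C: "\<forall>v. \<bar>U v\<bar> \<le> C" using assms(2) by blast
  have \<phi>: "\<And>y. 0 \<le> \<phi> y" and super: "\<And>y. 0 \<le> graph_laplacian w \<mu> \<phi> y + U y * \<phi> y"
    using assms(4,5) by auto
  have "fk_semigroup w \<mu> U t \<phi> x \<le> (\<integral>\<^sup>+\<omega>. (SUP n. fk_trunc w \<mu> U \<phi> n x t \<omega>) \<partial>chain_space)"
    unfolding fk_semigroup_eq_nn_integral_fk_integrand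
    using AE_holding_times_nonneg
    by (intro nn_integral_mono_AE) (auto elim!: eventually_mono intro: fk_integrand_le_SUP_fk_trunc[OF C \<phi> G _ t])
  also have "\<dots> = (SUP n. \<integral>\<^sup>+\<omega>. fk_trunc w \<mu> U \<phi> n x t \<omega> \<partial>chain_space)"
    by (intro nn_integral_monotone_convergence_SUP incseq_SucI le_funI fk_trunc_mono) measurable
  also have "\<dots> \<le> ennreal (\<phi> x)"
    by (intro SUP_least nn_integral_fk_trunc_le[OF G \<phi> super t])
  finally show "fk_semigroup w \<mu> U t \<phi> x \<le> ennreal (\<phi> x)" .
qed

end
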